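(* Let $N\ge3$, $M\ge2$, and let $\mathcal{F}$ be an $M\times N$ circular Florentine rectangle over $\mathbb{Z}_N$ with rows $\pi_0,\dots,\pi_{M-1}$; put $g_{i,j}=\pi_i^{-1}(j)$. Let $T\ge1$, $P=N+T$, $L=NP$, let $\mathcal{I}\subseteq\mathbb{Z}_P$ with $|\mathcal{I}|=T$, and write $\mathbb{Z}_P\setminus\mathcal{I}=\{l_0<l_1<\dots<l_{N-1}\}$. Let $a^i_{j,t}=\sqrt{P/N}\,\omega_N^{j g_{i,t}}$ and define the $N\times P$ matrix $\mathcal{B}^i=(b^i_{j,k})$ by $b^i_{j,k}=a^i_{j,t}\omega_{NP}^{k g_{i,t}}$ if $k=l_t$, and $b^i_{j,k}=0$ if $k\in\mathcal{I}$. Let $\hat u^i_n=b^i_{r,s}$ with $r=\lfloor n/P\rfloor$, $s=n-Pr$ ($0\le n<L$), and let $U^i$ be the time-domain sequence $u^i_t=\frac{1}{\sqrt L}\sum_{n=0}^{L-1}\hat u^i_n\omega_L^{nt}$. With $\theta_a=\max\{|\theta_{U^i}(\tau)|:0\le i<M,\ 0<\tau<L\}$ and $\theta_c=\max\{|\theta_{U^i,U^{i'}}(\tau)|:i\ne i',\ 0\le\tau<L\}$: (1) $\theta_a\ge P\sqrt{\frac{N(P-N)}{P-1}}$, with equality if $\mathbb{Z}_P\setminus\mathcal{I}$ is a cyclic difference set over $\mathbb{Z}_P$; (2) $\theta_c=P$; (3) with $\Omega=\{s+aP:s\in\mathcal{I},a\in\mathbb{Z}_N\}$, for every $i$ one has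 $\hat u^i_n=0$ for $n\in\Omega$ and $|\hat u^i_n|=\sqrt{P/N}$ for $n\notin\Omega$.
   Context: $\omega_n=e^{2\pi\sqrt{-1}/n}$. An $M\times N$ circular Florentine rectangle (CFR) over $\mathbb{Z}_N$ is an $M\times N$ array whose rows $\pi_i:\mathbb{Z}_N\to\mathbb{Z}_N$ are permutations such that for every $m\in\mathbb{Z}_N\setminus\{0\}$ and all $i,j,x,y$: $(\pi_i(x),\pi_i(x+m))=(\pi_j(y),\pi_j(y+m))$ (indices mod $N$) iff $i=j$ and $x=y$. $\pi_i^{-1}$ is the inverse permutation with values in $\{0,\dots,N-1\}$. Periodic correlation: $\theta_{C,D}(\tau)=\sum_{t=0}^{L-1}c_td^*_{\langle t+\tau\rangle_L}$, $\theta_C=\theta_{C,C}$. A subset $\mathcal{D}\subseteq\mathbb{Z}_v$ with $|\mathcal{D}|=k$ is a $(v,k,\lambda)$ cyclic difference set if $|(\varepsilon+\mathcal{D})\cap\mathcal{D}|=\lambda$ for every nonzero $\varepsilon\in\mathbb{Z}_v$. *)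

theory Defs
  imports Complex_Main
begin

definition omega :: "nat \<Rightarrow> complex" where
  "omega n = cis (2 * pi / real n)"

definition is_CFR :: "nat \<Rightarrow> nat \<Rightarrow> (nat \<Rightarrow> nat \<Rightarrow> nat) \<Rightarrow> bool" where
  "is_CFR M N rows \<longleftrightarrow>
     (\<forall>i<M. bij_betw (rows i) {..<N} {..<N}) \<and>
     (\<forall>m\<in>{1..<N}. \<forall>i<M. \<forall>j<M. \<forall>x<N. \<forall>y<N.
        ((rows i x, rows i ((x + m) mod N)) = (rows j y, rows j ((y + m) mod N)))
        \<longleftrightarrow> (i = j \<and> x = y))"

definition ginv :: "nat \<Rightarrow> (nat \<Rightarrow> nat \<Rightarrow> nat) \<Rightarrow> nat \<Rightarrow> nat \<Rightarrow> nat" where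
  "ginv N rows i j = inv_into {..<N} (rows i) j"

definition lseq :: "nat \<Rightarrow> nat set \<Rightarrow> nat list" where
  "lseq P I = sorted_list_of_set ({..<P} - I)"

definition acoef :: "nat \<Rightarrow> nat \<Rightarrow> (nat \<Rightarrow> nat \<Rightarrow> nat) \<Rightarrow> nat \<Rightarrow> nat \<Rightarrow> nat \<Rightarrow> complex" where
  "acoef N P rows i j t = complex_of_real (sqrt (real P / real N)) * omega N ^ (j * ginv N rows i t)"

definition bmat :: "nat \<Rightarrow> nat \<Rightarrow> nat set \<Rightarrow> (nat \<Rightarrow> nat \<Rightarrow> nat) \<Rightarrow> nat \<Rightarrow> nat \<Rightarrow> nat \<Rightarrow> complex" where
  "bmat N P I rows i j k =
     (if k \<in> I then 0
      else (let t = (THE t. t < N \<and> lseq P I ! t = k)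
            in acoef N P rows i j t * omega (N * P) ^ (k * ginv N rows i t)))"

definition uhat :: "nat \<Rightarrow> nat \<Rightarrow> nat set \<Rightarrow> (nat \<Rightarrow> nat \<Rightarrow> nat) \<Rightarrow> nat \<Rightarrow> nat \<Rightarrow> complex" where
  "uhat N P I rows i n = bmat N P I rows i (n div P) (n mod P)"

definition useq :: "nat \<Rightarrow> nat \<Rightarrow> nat set \<Rightarrow> (nat \<Rightarrow> nat \<Rightarrow> nat) \<Rightarrow> nat \<Rightarrow> nat \<Rightarrow> complex" where
  "useq N P I rows i t =
     (let L = N * P in
      (1 / complex_of_real (sqrt (real L))) * (\<Sum>n<L. uhat N P I rows i n * omega L ^ (n * t)))"

definition pcorr :: "nat \<Rightarrow> (nat \<Rightarrow> complex) \<Rightarrow> (nat \<Rightarrow> complex) \<Rightarrow> nat \<Rightarrow> complex" where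
  "pcorr L c d tau = (\<Sum>t<L. c t * cnj (d ((t + tau) mod L)))"

definition cyclic_difference_set :: "nat \<Rightarrow> nat \<Rightarrow> nat \<Rightarrow> nat set \<Rightarrow> bool" where
  "cyclic_difference_set v k lam D \<longleftrightarrow>
     D \<subseteq> {..<v} \<and> card D = k \<and>
     (\<forall>e\<in>{1..<v}. card ((\<lambda>d. (e + d) mod v) ` D \<inter> D) = lam)"

end

theory Submission
  imports Defs "HOL-Number_Theory.Cong"
begin

text \<open>
  The periodic correlation of two inverse DFTs is the DFT-side sum of the products of their
  spectra. For the sequences of the construction this sum splits into N blocks of P subcarriers;
  the pilots in I contribute nothing, and summing over the blocks turns the contribution of the
  data subcarrier l_t into a full geometric sum over the N-th roots of unity. Hence only those t
  with g_{i,t} - g_{i',t} = tau (mod N) survive, each with modulus P.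

  For i \<noteq> i' the circular Florentine property makes t \<mapsto> g_{i,t} - g_{i',t} (mod N) a
  bijection onto Z_N, so exactly one term survives and the cross-correlation has modulus P.
  For i = i' a term survives only when N divides tau, and then the autocorrelation is P times the
  Fourier coefficient at m = tau / N of the indicator of D = Z_P - I. By Parseval these coefficients
  satisfy sum_{m \<noteq> 0} |D^(m)|^2 = N (P - N), so the largest one is at least
  sqrt (N (P - N) / (P - 1)); for a cyclic difference set |D^(m)|^2 = N - lambda is constant
  and the bound is attained.
\<close>

definition unity_root :: "nat \<Rightarrow> int \<Rightarrow> complex" where
  "unity_root n k = cis (2 * pi * of_int k / real n)"

lemma omega_power: "omega n ^ k = unity_root n (int k)"
  unfolding omega_def unity_root_def DeMoivre by (simp add: field_simps)

lemma unity_root_0 [simp]: "unity_root n 0 = 1"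
  by (simp add: unity_root_def)

lemma unity_root_add: "unity_root n j * unity_root n k = unity_root n (j + k)"
  unfolding unity_root_def cis_mult by (simp add: add_divide_distrib distrib_left)

lemma cnj_unity_root: "cnj (unity_root n k) = unity_root n (- k)"
  unfolding unity_root_def cis_cnj by simp

lemma norm_unity_root [simp]: "cmod (unity_root n k) = 1"
  unfolding unity_root_def by simp

lemma unity_root_power: "unity_root n k ^ m = unity_root n (int m * k)"
  unfolding unity_root_def DeMoivre by (simp add: field_simps)

lemma unity_root_mult_index: "0 < m \<Longrightarrow> unity_root (m * n) (int m * k) = unity_root n k"
  unfolding unity_root_def by (simp add: field_simps)

lemma unity_root_eq_1_iff:
  assumes "0 < n"
  shows "unity_root n k = 1 \<longleftrightarrow> int n dvd k"
proof
  assume "unity_root n k = 1"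
  then have "cos (2 * pi * of_int k / real n) = 1"
    unfolding unity_root_def by (metis cis.sel(1) one_complex.sel(1))
  then obtain q :: int where "2 * pi * of_int k / real n = of_int q * 2 * pi"
    using cos_one_2pi_int by blast
  then have "real_of_int k = real_of_int (q * int n)"
    using assms by (simp add: field_simps)
  then show "int n dvd k"
    by (simp only: of_int_eq_iff dvd_triv_right)
next
  assume "int n dvd k"
  then obtain q where "k = int n * q" ..
  then have "2 * pi * of_int k / real n = 2 * pi * of_int q"
    using assms by simp
  then show "unity_root n k = 1"
    unfolding unity_root_def by simp
qed

lemma unity_root_cong:
  assumes "0 < n" "j mod int n = k mod int n"
  shows "unity_root n j = unity_root n k"
proof -
  have "unity_root n (j - k) = 1"
    using assms by (simp add: unity_root_eq_1_iff mod_eq_dvd_iff)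
  then show ?thesis
    using unity_root_add[of n "j - k" k] by simp
qed

lemma sum_unity_root:
  assumes "0 < n"
  shows "(\<Sum>r<n. unity_root n (int r * k)) = (if int n dvd k then of_nat n else 0)"
proof -
  have "(\<Sum>r<n. unity_root n (int r * k)) = (\<Sum>r<n. unity_root n k ^ r)"
    by (simp add: unity_root_power)
  also have "\<dots> = (if int n dvd k then of_nat n else 0)"
  proof (cases "int n dvd k")
    case True
    then have "unity_root n k = 1"
      using assms unity_root_eq_1_iff by blast
    then show ?thesis
      using True by simp
  next
    case False
    then have "unity_root n k \<noteq> 1"
      using assms unity_root_eq_1_iff by blast
    then have "(\<Sum>r<n. unity_root n k ^ r) = (unity_root n k ^ n - 1) / (unity_root n k - 1)"
      by (rule geometric_sum)
    also have "unity_root n k ^ n = 1"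
      using assms by (simp add: unity_root_power unity_root_eq_1_iff)
    finally show ?thesis
      using False by simp
  qed
  finally show ?thesis .
qed

lemma int_dvd_diff_iff_eq: "a < n \<Longrightarrow> b < n \<Longrightarrow> int n dvd int a - int b \<longleftrightarrow> a = b"
  by (simp flip: mod_eq_dvd_iff)

lemma sum_unity_root_diff:
  "a < n \<Longrightarrow> b < n \<Longrightarrow>
     (\<Sum>r<n. unity_root n (int r * (int a - int b))) = (if a = b then of_nat n else 0)"
  by (simp add: sum_unity_root int_dvd_diff_iff_eq)

definition idft :: "nat \<Rightarrow> (nat \<Rightarrow> complex) \<Rightarrow> nat \<Rightarrow> complex" where
  "idft L a t = (1 / complex_of_real (sqrt (real L))) * (\<Sum>n<L. a n * omega L ^ (n * t))"

lemma idft_mult_cnj: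
  "idft L a t * cnj (idft L b t') =
     (\<Sum>n<L. \<Sum>m<L. a n * cnj (b m) *
        (unity_root L (int n * int t) * unity_root L (- (int m * int t')))) / of_nat L"
proof -
  have "complex_of_real (sqrt (real L)) * complex_of_real (sqrt (real L)) = of_nat L"
    by (simp flip: of_real_mult)
  then show ?thesis
    unfolding idft_def omega_power
    by (simp add: sum_product sum_divide_distrib cnj_unity_root mult_ac)
qed

lemma pcorr_idft:
  assumes "0 < L"
  shows "pcorr L (idft L a) (idft L b) \<tau> = (\<Sum>n<L. a n * cnj (b n) * unity_root L (- int (n * \<tau>)))"
proof -
  have periodic: "unity_root L (int n * int t) * unity_root L (- (int m * int ((t + \<tau>) mod L))) =
      unity_root L (- int (m * \<tau>)) * unity_root L (int t * (int n - int m))" for n m t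
  proof -
    have "int m * int ((t + \<tau>) mod L) mod int L = int m * (int t + int \<tau>) mod int L"
      by (simp add: zmod_int mod_mult_right_eq)
    then have "unity_root L (- (int m * int ((t + \<tau>) mod L))) =
        unity_root L (- (int m * (int t + int \<tau>)))"
      by (intro unity_root_cong[OF assms] mod_minus_cong)
    then show ?thesis
      by (simp add: unity_root_add algebra_simps)
  qed
  have "pcorr L (idft L a) (idft L b) \<tau> =
      (\<Sum>t<L. \<Sum>n<L. \<Sum>m<L. a n * cnj (b m) * unity_root L (- int (m * \<tau>)) *
          unity_root L (int t * (int n - int m))) / of_nat L"
    unfolding pcorr_def idft_mult_cnj periodic by (simp add: sum_divide_distrib mult.assoc)
  also have "\<dots> = (\<Sum>n<L. \<Sum>m<L. \<Sum>t<L. a n * cnj (b m) * unity_root L (- int (m * \<tau>)) *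
          unity_root L (int t * (int n - int m))) / of_nat L"
    by (subst sum.swap, subst sum.swap) (rule refl)
  also have "\<dots> = (\<Sum>n<L. \<Sum>m<L. a n * cnj (b m) * unity_root L (- int (m * \<tau>)) *
          (\<Sum>t<L. unity_root L (int t * (int n - int m)))) / of_nat L"
    by (simp only: sum_distrib_left)
  also have "\<dots> = (\<Sum>n<L. \<Sum>m<L. if n = m then
          a n * cnj (b m) * unity_root L (- int (m * \<tau>)) * of_nat L else 0) / of_nat L"
    by (intro arg_cong2[where f = "(/)"] sum.cong refl) (simp add: sum_unity_root_diff)
  also have "\<dots> = (\<Sum>n<L. a n * cnj (b n) * unity_root L (- int (n * \<tau>)))"
    using assms by (simp add: sum_divide_distrib)
  finally show ?thesis .
qed

definition dft_indicator :: "nat \<Rightarrow> nat set \<Rightarrow> nat \<Rightarrow> complex" where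
  "dft_indicator P D m = (\<Sum>s\<in>D. unity_root P (- (int s * int m)))"

lemma dft_indicator_mult_cnj:
  "dft_indicator P D m * cnj (dft_indicator P D m) =
     (\<Sum>s\<in>D. \<Sum>s'\<in>D. unity_root P (int m * (int s - int s')))"
  unfolding dft_indicator_def
  by (simp add: sum_product cnj_unity_root unity_root_add algebra_simps)

lemma norm_dft_indicator_0: "cmod (dft_indicator P D 0) = real (card D)"
  by (simp add: dft_indicator_def unity_root_def)

lemma sum_norm_dft_indicator_sq:
  assumes "D \<subseteq> {..<P}"
  shows "(\<Sum>m<P. (cmod (dft_indicator P D m))\<^sup>2) = real (card D) * real P"
proof -
  have "complex_of_real (\<Sum>m<P. (cmod (dft_indicator P D m))\<^sup>2) =
      (\<Sum>m<P. \<Sum>s\<in>D. \<Sum>s'\<in>D. unity_root P (int m * (int s - int s')))"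
    by (simp only: of_real_sum complex_norm_square dft_indicator_mult_cnj)
  also have "\<dots> = (\<Sum>s\<in>D. \<Sum>s'\<in>D. \<Sum>m<P. unity_root P (int m * (int s - int s')))"
    by (simp add: sum.swap[of _ "{..<P}"])
  also have "\<dots> = (\<Sum>s\<in>D. \<Sum>s'\<in>D. if s' = s then of_nat P else 0)"
    using assms by (intro sum.cong refl) (auto simp: sum_unity_root_diff subset_eq)
  also have "\<dots> = complex_of_real (real (card D) * real P)"
    using finite_subset[OF assms finite_lessThan] by simp
  finally show ?thesis
    by (simp only: of_real_eq_iff)
qed

lemma sum_norm_dft_indicator_sq_nonzero:
  assumes "D \<subseteq> {..<P}" "0 < P"
  shows "(\<Sum>m\<in>{1..<P}. (cmod (dft_indicator P D m))\<^sup>2) = real (card D) * (real P - real (card D))"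
proof -
  have "{..<P} = insert 0 {1..<P}"
    using assms(2) by auto
  then show ?thesis
    using sum_norm_dft_indicator_sq[OF assms(1)]
    by (simp add: norm_dft_indicator_0 power2_eq_square algebra_simps)
qed

lemma Max_norm_dft_indicator_ge:
  assumes "D \<subseteq> {..<P}" "2 \<le> P"
  shows "sqrt (real (card D) * (real P - real (card D)) / (real P - 1))
           \<le> Max ((\<lambda>m. cmod (dft_indicator P D m)) ` {1..<P})"
    (is "_ \<le> ?\<mu>")
proof -
  have P_pos: "0 < P"
    using assms(2) by simp
  have le_Max: "cmod (dft_indicator P D m) \<le> ?\<mu>" if "m \<in> {1..<P}" for m
    using that by (intro Max_ge) auto
  then have "real (card D) * (real P - real (card D)) \<le> (\<Sum>m\<in>{1..<P}. ?\<mu>\<^sup>2)"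
    unfolding sum_norm_dft_indicator_sq_nonzero[OF assms(1) P_pos, symmetric]
    by (intro sum_mono power_mono) auto
  also have "\<dots> = (real P - 1) * ?\<mu>\<^sup>2"
    using assms by (simp add: of_nat_diff)
  finally have "real (card D) * (real P - real (card D)) / (real P - 1) \<le> ?\<mu>\<^sup>2"
    using assms by (simp add: field_simps)
  moreover have "0 \<le> ?\<mu>"
    using assms by (intro order.trans[OF norm_ge_zero le_Max]) auto
  ultimately show ?thesis
    by (intro real_le_lsqrt)
qed

lemma bij_betw_add_mod: "bij_betw (\<lambda>e. (e + s) mod P) {..<P} {..<(P::nat)}"
proof -
  have "inj_on (\<lambda>e. (e + s) mod P) {..<P}"
    by (intro inj_onI)
       (auto simp: cong_add_rcancel_nat simp flip: cong_def intro: cong_less_modulus_unique_nat)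
  moreover have "(\<lambda>e. (e + s) mod P) ` {..<P} = {..<P}"
    using calculation by (intro endo_inj_surj) auto
  ultimately show ?thesis
    by (simp add: bij_betw_def)
qed

lemma sum_unity_root_shift:
  assumes "D \<subseteq> {..<P}"
  shows "(\<Sum>s\<in>D. unity_root P (int m * (int s - int s'))) =
           (\<Sum>e<P. if (e + s') mod P \<in> D then unity_root P (int m * int e) else 0)"
proof -
  have "(\<Sum>s\<in>D. unity_root P (int m * (int s - int s'))) =
      (\<Sum>s<P. if s \<in> D then unity_root P (int m * (int s - int s')) else 0)"
    using assms by (simp add: sum.If_cases Int_absorb1)
  also have "\<dots> = (\<Sum>e<P. if (e + s') mod P \<in> D
                     then unity_root P (int m * (int ((e + s') mod P) - int s')) else 0)"
    using sum.reindex_bij_betw[OF bij_betw_add_mod, symmetric] by blast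
  also have "\<dots> = (\<Sum>e<P. if (e + s') mod P \<in> D then unity_root P (int m * int e) else 0)"
  proof (intro sum.cong refl if_cong unity_root_cong)
    fix e assume "e \<in> {..<P}"
    then show "0 < P" by simp
    have "(int ((e + s') mod P) - int s') mod int P = int e mod int P"
      by (simp add: zmod_int mod_diff_left_eq)
    then show "int m * (int ((e + s') mod P) - int s') mod int P = int m * int e mod int P"
      by (metis mod_mult_right_eq)
  qed
  finally show ?thesis .
qed

lemma card_add_mod_Int:
  fixes D :: "nat set"
  assumes "D \<subseteq> {..<P}"
  shows "card {s \<in> D. (e + s) mod P \<in> D} = card ((\<lambda>d. (e + d) mod P) ` D \<inter> D)"
proof -
  let ?S = "{s \<in> D. (e + s) mod P \<in> D}"
  have "inj_on (\<lambda>d. (d + e) mod P) ?S"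
    using assms by (intro inj_on_subset[OF bij_betw_imp_inj_on[OF bij_betw_add_mod[of e P]]]) auto
  then have "card ?S = card ((\<lambda>d. (e + d) mod P) ` ?S)"
    by (simp add: card_image add.commute)
  also have "(\<lambda>d. (e + d) mod P) ` ?S = (\<lambda>d. (e + d) mod P) ` D \<inter> D"
    by auto
  finally show ?thesis .
qed

lemma cyclic_difference_set_dft_indicator_mult_cnj:
  assumes D: "cyclic_difference_set P k lam D" and m: "m \<in> {1..<P}"
  shows "dft_indicator P D m * cnj (dft_indicator P D m) = of_nat k - of_nat lam"
proof -
  define overlap where "overlap e = card {s \<in> D. (e + s) mod P \<in> D}" for e
  have D_sub: "D \<subseteq> {..<P}" and "finite D"
    using D finite_subset unfolding cyclic_difference_set_def by auto
  have "{s \<in> D. (0 + s) mod P \<in> D} = D"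
    using D_sub by auto
  then have "overlap 0 = k"
    using D unfolding overlap_def cyclic_difference_set_def by simp
  moreover have "overlap e = lam" if "e \<in> {1..<P}" for e
    using D that unfolding overlap_def card_add_mod_Int[OF D_sub] cyclic_difference_set_def by blast
  ultimately have overlap: "overlap e = (if e = 0 then k else lam)" if "e < P" for e
    using that by simp
  have "dft_indicator P D m * cnj (dft_indicator P D m) =
      (\<Sum>s'\<in>D. \<Sum>e<P. if (e + s') mod P \<in> D then unity_root P (int m * int e) else 0)"
    by (simp add: dft_indicator_mult_cnj sum.swap[of _ D] sum_unity_root_shift[OF D_sub])
  also have "\<dots> = (\<Sum>e<P. of_nat (overlap e) * unity_root P (int m * int e))"
    unfolding overlap_def using \<open>finite D\<close>
    by (subst sum.swap) (simp add: sum.inter_filter[symmetric])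
  also have "\<dots> = (\<Sum>e<P. of_nat lam * unity_root P (int e * int m) +
                       (if e = 0 then of_nat k - of_nat lam else 0))"
    by (intro sum.cong refl) (simp add: overlap algebra_simps)
  also have "\<dots> = of_nat k - of_nat lam + of_nat lam * (\<Sum>e<P. unity_root P (int e * int m))"
    using m by (simp add: sum.distrib sum_distrib_left)
  also have "(\<Sum>e<P. unity_root P (int e * int m)) = 0"
    using m by (simp add: sum_unity_root nat_dvd_not_less)
  finally show ?thesis
    by simp
qed

lemma norm_dft_indicator_cyclic_difference_set:
  assumes D: "cyclic_difference_set P k lam D" and m: "m \<in> {1..<P}"
  shows "cmod (dft_indicator P D m) = sqrt (real k * (real P - real k) / (real P - 1))"
proof -
  have D_sub: "D \<subseteq> {..<P}" and card_D: "card D = k"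
    using D unfolding cyclic_difference_set_def by auto
  have sq: "(cmod (dft_indicator P D m'))\<^sup>2 = real k - real lam" if "m' \<in> {1..<P}" for m'
  proof -
    have "complex_of_real ((cmod (dft_indicator P D m'))\<^sup>2) = complex_of_real (real k - real lam)"
      unfolding complex_norm_square cyclic_difference_set_dft_indicator_mult_cnj[OF D that] by simp
    then show ?thesis
      by (simp only: of_real_eq_iff)
  qed
  have "real k * (real P - real k) = (\<Sum>m'\<in>{1..<P}. (cmod (dft_indicator P D m'))\<^sup>2)"
    using sum_norm_dft_indicator_sq_nonzero[OF D_sub] m card_D by simp
  also have "\<dots> = (\<Sum>m'\<in>{1..<P}. real k - real lam)"
    by (rule sum.cong[OF refl sq])
  also have "\<dots> = (real P - 1) * (real k - real lam)"
    using m by (simp add: of_nat_diff)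
  finally have "real k - real lam = real k * (real P - real k) / (real P - 1)"
    using m by (simp add: field_simps)
  then show ?thesis
    using sq[OF m] by (metis norm_ge_zero real_sqrt_unique)
qed

lemma Max_norm_dft_indicator_cyclic_difference_set:
  assumes "cyclic_difference_set P k lam D" "2 \<le> P"
  shows "Max ((\<lambda>m. cmod (dft_indicator P D m)) ` {1..<P}) =
           sqrt (real k * (real P - real k) / (real P - 1))"
proof -
  have "(\<lambda>m. cmod (dft_indicator P D m)) ` {1..<P} = {sqrt (real k * (real P - real k) / (real P - 1))}"
    using assms norm_dft_indicator_cyclic_difference_set by force
  then show ?thesis
    by simp
qed

lemma bij_betw_ginv:
  assumes "is_CFR M N rows" "i < M"
  shows "bij_betw (ginv N rows i) {..<N} {..<N}"
  using assms unfolding is_CFR_def ginv_def[abs_def] by (auto intro: bij_betw_inv_into)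

lemma rows_ginv:
  assumes "is_CFR M N rows" "i < M" "j < N"
  shows "rows i (ginv N rows i j) = j"
  using assms unfolding is_CFR_def ginv_def by (auto intro: bij_betw_inv_into_right)

lemma add_mod_eq_of_mod_eq_diff:
  assumes "y < N" "int m mod int N = (int y - int x) mod int N"
  shows "(x + m) mod N = y"
proof -
  have "int ((x + m) mod N) = (int x + int m mod int N) mod int N"
    by (simp add: zmod_int mod_add_right_eq)
  also have "\<dots> = int y"
    using assms by (simp add: mod_add_right_eq)
  finally show ?thesis
    by simp
qed

text \<open>
  If the differences agreed at t \<noteq> t', the ordered pair (t, t') would occur at the same
  circular distance m in the rows i and i', which the Florentine property forbids.
\<close>

lemma is_CFR_ginv_diff_inj:
  assumes CFR: "is_CFR M N rows" and i: "i < M" "i' < M" "i \<noteq> i'"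
  shows "inj_on (\<lambda>t. (int (ginv N rows i t) - int (ginv N rows i' t)) mod int N) {..<N}"
proof (rule inj_onI, rule ccontr)
  fix t t'
  assume t: "t \<in> {..<N}" "t' \<in> {..<N}" and "t \<noteq> t'"
    and eq: "(int (ginv N rows i t) - int (ginv N rows i' t)) mod int N =
             (int (ginv N rows i t') - int (ginv N rows i' t')) mod int N"
  define x x' y y' where "x = ginv N rows i t" and "x' = ginv N rows i t'"
    and "y = ginv N rows i' t" and "y' = ginv N rows i' t'"
  have less: "x < N" "x' < N" "y < N" "y' < N"
    using t bij_betw_ginv[OF CFR] i unfolding x_def x'_def y_def y'_def bij_betw_def by auto
  have rows: "rows i x = t" "rows i x' = t'" "rows i' y = t" "rows i' y' = t'"
    using t rows_ginv[OF CFR] i unfolding x_def x'_def y_def y'_def by auto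
  define m where "m = nat ((int x' - int x) mod int N)"
  have m: "int m = (int x' - int x) mod int N"
    unfolding m_def using less by simp
  have "(x + m) mod N = x'"
    using less m by (intro add_mod_eq_of_mod_eq_diff) simp_all
  moreover have "(y + m) mod N = y'"
  proof (intro add_mod_eq_of_mod_eq_diff)
    have "(int x' - int x) mod int N = (int y' - int y) mod int N"
      using eq unfolding x_def x'_def y_def y'_def by algebra
    then show "int m mod int N = (int y' - int y) mod int N"
      using m by simp
  qed (use less in simp)
  moreover have "m \<in> {1..<N}"
  proof -
    have "x \<noteq> x'"
      using rows \<open>t \<noteq> t'\<close> by auto
    then have "\<not> int N dvd int x' - int x"
      using less by (simp add: int_dvd_diff_iff_eq)
    then have "m \<noteq> 0"
      using m by (auto simp: dvd_eq_mod_eq_0)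
    moreover have "int m < int N"
      using less m by simp
    ultimately show ?thesis
      by simp
  qed
  ultimately have "(rows i x, rows i ((x + m) mod N)) = (rows i' y, rows i' ((y + m) mod N))"
    using rows by simp
  then show False
    using CFR i less \<open>m \<in> {1..<N}\<close> unfolding is_CFR_def by blast
qed

lemma is_CFR_ginv_diff_bij:
  assumes "is_CFR M N rows" "i < M" "i' < M" "i \<noteq> i'"
  shows "bij_betw (\<lambda>t. (int (ginv N rows i t) - int (ginv N rows i' t)) mod int N)
           {..<N} {0..<int N}"
proof -
  let ?\<phi> = "\<lambda>t. (int (ginv N rows i t) - int (ginv N rows i' t)) mod int N"
  have inj: "inj_on ?\<phi> {..<N}"
    using assms by (rule is_CFR_ginv_diff_inj)
  moreover have "?\<phi> ` {..<N} = {0..<int N}"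
    using card_image[OF inj] by (intro card_subset_eq) auto
  ultimately show ?thesis
    by (simp add: bij_betw_def)
qed

lemma sum_lessThan_mult:
  fixes f :: "nat \<Rightarrow> 'a::comm_monoid_add"
  shows "(\<Sum>n<N * P. f n) = (\<Sum>r<N. \<Sum>s<P. f (r * P + s))"
proof -
  have "(\<Sum>n<N * P. f n) = (\<Sum>r<N. sum f {r * P..<r * P + P})"
    using sum.nat_group[of f P N] by (simp add: mult.commute)
  also have "\<dots> = (\<Sum>r<N. \<Sum>s<P. f (r * P + s))"
  proof (rule sum.cong[OF refl])
    fix r
    show "sum f {r * P..<r * P + P} = (\<Sum>s<P. f (r * P + s))"
      using sum.shift_bounds_nat_ivl[of f 0 "r * P" P]
      by (simp add: atLeast0LessThan add.commute)
  qed
  finally show ?thesis .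
qed

locale cfr_sequences =
  fixes N M P :: nat and rows :: "nat \<Rightarrow> nat \<Rightarrow> nat" and I :: "nat set"
  assumes N_pos: "0 < N" and CFR: "is_CFR M N rows"
    and I_subset: "I \<subseteq> {..<P}" and card_I: "N + card I = P"
begin

abbreviation D :: "nat set" where
  "D \<equiv> {..<P} - I"

abbreviation l :: "nat \<Rightarrow> nat" where
  "l t \<equiv> lseq P I ! t"

abbreviation u :: "nat \<Rightarrow> nat \<Rightarrow> complex" where
  "u i \<equiv> useq N P I rows i"

abbreviation u_hat :: "nat \<Rightarrow> nat \<Rightarrow> complex" where
  "u_hat i \<equiv> uhat N P I rows i"

abbreviation g :: "nat \<Rightarrow> nat \<Rightarrow> nat" where
  "g i t \<equiv> ginv N rows i t"

lemma card_D: "card D = N"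
  using I_subset card_I finite_subset[OF I_subset] by (simp add: card_Diff_subset)

lemma distinct_l: "distinct (lseq P I)" and set_l: "set (lseq P I) = D"
  and length_l: "length (lseq P I) = N"
  unfolding lseq_def using card_D by auto

lemma bij_betw_l: "bij_betw l {..<N} D"
  using bij_betw_nth[OF distinct_l] set_l length_l by auto

lemma l_in_D: "t < N \<Longrightarrow> l t \<in> D"
  using bij_betw_l by (auto simp: bij_betw_def)

lemma the_index_l: "t < N \<Longrightarrow> (THE t'. t' < N \<and> l t' = l t) = t"
  using distinct_l length_l by (auto simp: nth_eq_iff_index_eq)

lemma sum_lessThan_P: "(\<Sum>s<P. f s) = (\<Sum>s\<in>I. f s) + (\<Sum>t<N. f (l t))"
proof -
  have "(\<Sum>s<P. f s) = (\<Sum>s\<in>I. f s) + (\<Sum>s\<in>D. f s)"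
    using I_subset by (simp add: sum.subset_diff add.commute)
  also have "(\<Sum>s\<in>D. f s) = (\<Sum>t<N. f (l t))"
    using sum.reindex_bij_betw[OF bij_betw_l, of f] by simp
  finally show ?thesis .
qed

lemma uhat_pilot: "s \<in> I \<Longrightarrow> u_hat i (r * P + s) = 0"
  using I_subset unfolding uhat_def bmat_def by auto

lemma uhat_data:
  assumes "t < N"
  shows "u_hat i (r * P + l t) =
           complex_of_real (sqrt (real P / real N)) *
           unity_root (N * P) (int (r * P + l t) * int (g i t))"
proof -
  have "l t < P" "l t \<notin> I"
    using l_in_D[OF assms] by auto
  then have "u_hat i (r * P + l t) = complex_of_real (sqrt (real P / real N)) *
      (unity_root N (int (r * g i t)) * unity_root (N * P) (int (l t * g i t)))"
    using assms by (simp add: uhat_def bmat_def acoef_def the_index_l omega_power)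
  also have "unity_root N (int (r * g i t)) = unity_root (P * N) (int P * int (r * g i t))"
    using card_I N_pos by (simp add: unity_root_mult_index)
  finally show ?thesis
    by (simp add: unity_root_add algebra_simps)
qed

lemma useq_eq_idft: "u i = idft (N * P) (u_hat i)"
  by (simp add: useq_def idft_def fun_eq_iff Let_def)

lemma uhat_data_mult_cnj:
  assumes "t < N"
  shows "u_hat i (r * P + l t) * cnj (u_hat i' (r * P + l t)) *
           unity_root (N * P) (- int ((r * P + l t) * \<tau>)) =
    of_nat P / of_nat N *
    unity_root (N * P) (int (l t) * (int (g i t) - int (g i' t) - int \<tau>)) *
    unity_root N (int r * (int (g i t) - int (g i' t) - int \<tau>))"
proof -
  define c where "c = complex_of_real (sqrt (real P / real N))"
  define e where "e = int (g i t) - int (g i' t) - int \<tau>"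
  define n where "n = r * P + l t"
  have "u_hat i n * cnj (u_hat i' n) * unity_root (N * P) (- int (n * \<tau>)) =
      c * c * (unity_root (N * P) (int n * int (g i t)) * cnj (unity_root (N * P) (int n * int (g i' t))) *
               unity_root (N * P) (- int (n * \<tau>)))"
    unfolding n_def c_def uhat_data[OF assms] by (simp add: mult_ac)
  also have "c * c = of_nat P / of_nat N"
    unfolding c_def by (simp flip: of_real_mult)
  also have "unity_root (N * P) (int n * int (g i t)) *
      cnj (unity_root (N * P) (int n * int (g i' t))) * unity_root (N * P) (- int (n * \<tau>)) =
      unity_root (N * P) (int (l t) * e + int P * (int r * e))"
    unfolding n_def e_def by (simp add: cnj_unity_root unity_root_add algebra_simps)
  also have "\<dots> = unity_root (N * P) (int (l t) * e) * unity_root N (int r * e)"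
    using card_I N_pos by (simp flip: unity_root_add add: unity_root_mult_index mult.commute[of N])
  finally show ?thesis
    unfolding n_def e_def by (simp only: mult.assoc)
qed

lemma pcorr_useq:
  "pcorr (N * P) (u i) (u i') \<tau> = of_nat P *
     (\<Sum>t<N. if int N dvd int (g i t) - int (g i' t) - int \<tau>
            then unity_root (N * P) (int (l t) * (int (g i t) - int (g i' t) - int \<tau>))
            else 0)"
proof -
  define e where "e t = int (g i t) - int (g i' t) - int \<tau>" for t
  have "pcorr (N * P) (u i) (u i') \<tau> =
      (\<Sum>n<N * P. u_hat i n * cnj (u_hat i' n) * unity_root (N * P) (- int (n * \<tau>)))"
    unfolding useq_eq_idft using N_pos card_I by (intro pcorr_idft) simp
  also have "\<dots> = (\<Sum>r<N. \<Sum>t<N. u_hat i (r * P + l t) * cnj (u_hat i' (r * P + l t)) *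
                      unity_root (N * P) (- int ((r * P + l t) * \<tau>)))"
    by (simp add: sum_lessThan_mult sum_lessThan_P uhat_pilot)
  also have "\<dots> = (\<Sum>r<N. \<Sum>t<N. of_nat P / of_nat N *
                      unity_root (N * P) (int (l t) * e t) * unity_root N (int r * e t))"
    unfolding e_def by (intro sum.cong refl uhat_data_mult_cnj) simp
  also have "\<dots> = (\<Sum>t<N. of_nat P / of_nat N * unity_root (N * P) (int (l t) * e t) *
                      (\<Sum>r<N. unity_root N (int r * e t)))"
    by (subst sum.swap) (simp add: sum_distrib_left)
  also have "\<dots> = (\<Sum>t<N. of_nat P *
                      (if int N dvd e t then unity_root (N * P) (int (l t) * e t) else 0))"
    using N_pos by (intro sum.cong refl) (simp add: sum_unity_root)
  also have "\<dots> = of_nat P *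
                    (\<Sum>t<N. if int N dvd e t then unity_root (N * P) (int (l t) * e t) else 0)"
    by (simp only: sum_distrib_left)
  finally show ?thesis
    unfolding e_def .
qed

lemma pcorr_useq_self:
  "pcorr (N * P) (u i) (u i) \<tau> = (if N dvd \<tau> then of_nat P * dft_indicator P D (\<tau> div N) else 0)"
proof (cases "N dvd \<tau>")
  case True
  then obtain q where \<tau>: "\<tau> = N * q" ..
  have "unity_root (N * P) (int (l t) * - int \<tau>) = unity_root P (- (int (l t) * int q))" for t
    using N_pos unity_root_mult_index[of N P "- (int (l t) * int q)"] by (simp add: \<tau> algebra_simps)
  then have "pcorr (N * P) (u i) (u i) \<tau> = of_nat P * (\<Sum>t<N. unity_root P (- (int (l t) * int q)))"
    using True by (simp add: pcorr_useq)
  also have "(\<Sum>t<N. unity_root P (- (int (l t) * int q))) = dft_indicator P D q"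
    unfolding dft_indicator_def
    using sum.reindex_bij_betw[OF bij_betw_l, of "\<lambda>s. unity_root P (- (int s * int q))"] by simp
  finally show ?thesis
    using True N_pos \<tau> by simp
qed (simp add: pcorr_useq)

lemma norm_pcorr_useq_cross:
  assumes "i < M" "i' < M" "i \<noteq> i'"
  shows "cmod (pcorr (N * P) (u i) (u i') \<tau>) = real P"
proof -
  let ?\<phi> = "\<lambda>t. (int (g i t) - int (g i' t)) mod int N"
  have bij: "bij_betw ?\<phi> {..<N} {0..<int N}"
    using CFR assms by (rule is_CFR_ginv_diff_bij)
  moreover have "int \<tau> mod int N \<in> {0..<int N}"
    using N_pos by simp
  ultimately have "int \<tau> mod int N \<in> ?\<phi> ` {..<N}"
    by (simp add: bij_betw_def)
  then obtain t0 where t0: "t0 < N" "?\<phi> t0 = int \<tau> mod int N"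
    by auto
  have "int N dvd int (g i t) - int (g i' t) - int \<tau> \<longleftrightarrow> t = t0" if "t < N" for t
  proof -
    have "int N dvd int (g i t) - int (g i' t) - int \<tau> \<longleftrightarrow> ?\<phi> t = ?\<phi> t0"
      unfolding t0(2) mod_eq_dvd_iff ..
    also have "\<dots> \<longleftrightarrow> t = t0"
      using bij that t0 by (auto simp: bij_betw_def inj_on_def)
    finally show ?thesis .
  qed
  then have "pcorr (N * P) (u i) (u i') \<tau> = of_nat P *
      unity_root (N * P) (int (l t0) * (int (g i t0) - int (g i' t0) - int \<tau>))"
    using t0 by (simp add: pcorr_useq cong: if_cong)
  then show ?thesis
    by (simp add: norm_mult)
qed

lemma uhat_Omega:
  assumes "n < N * P"
  shows "(n \<in> {s + a * P | s a. s \<in> I \<and> a < N} \<longrightarrow> u_hat i n = 0) \<and>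
         (n \<notin> {s + a * P | s a. s \<in> I \<and> a < N} \<longrightarrow> cmod (u_hat i n) = sqrt (real P / real N))"
proof -
  have n: "n = n mod P + n div P * P"
    by simp
  have "n div P < N"
    using assms by (simp add: less_mult_imp_div_less)
  have Omega: "n \<in> {s + a * P | s a. s \<in> I \<and> a < N} \<longleftrightarrow> n mod P \<in> I"
  proof
    assume "n \<in> {s + a * P | s a. s \<in> I \<and> a < N}"
    then obtain s a where "s \<in> I" "n = s + a * P"
      by blast
    then show "n mod P \<in> I"
      using I_subset by auto
  next
    assume "n mod P \<in> I"
    then show "n \<in> {s + a * P | s a. s \<in> I \<and> a < N}"
      using n \<open>n div P < N\<close> by blast
  qed
  show ?thesis
  proof (cases "n mod P \<in> I")
    case True
    then show ?thesis
      unfolding Omega using uhat_pilot[OF True, of i "n div P"] n by simp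
  next
    case False
    have "n mod P < P"
      using N_pos card_I by simp
    with False have "n mod P \<in> l ` {..<N}"
      using bij_betw_l by (simp add: bij_betw_def)
    then obtain t where t: "t < N" "l t = n mod P"
      by auto
    then have "u_hat i n = u_hat i (n div P * P + l t)"
      using n by simp
    then show ?thesis
      unfolding Omega using uhat_data[OF t(1), of i "n div P"] False by (simp add: norm_mult)
  qed
qed

lemma Max_norm_pcorr_useq_self:
  assumes "0 < M" "2 \<le> P"
  shows "Max {cmod (pcorr (N * P) (u i) (u i) \<tau>) | i \<tau>. i < M \<and> 0 < \<tau> \<and> \<tau> < N * P} =
           real P * Max ((\<lambda>m. cmod (dft_indicator P D m)) ` {1..<P})"
    (is "Max ?A = real P * ?\<mu>")
proof (rule Max_eqI)
  have "?A \<subseteq> insert 0 ((\<lambda>m. real P * cmod (dft_indicator P D m)) ` {1..<P})"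
  proof
    fix y assume "y \<in> ?A"
    then obtain \<tau> where \<tau>: "0 < \<tau>" "\<tau> < N * P"
      and y: "y = cmod (if N dvd \<tau> then of_nat P * dft_indicator P D (\<tau> div N) else 0)"
      by (auto simp: pcorr_useq_self)
    show "y \<in> insert 0 ((\<lambda>m. real P * cmod (dft_indicator P D m)) ` {1..<P})"
    proof (cases "N dvd \<tau>")
      case True
      then have "\<tau> div N \<in> {1..<P}"
        using \<tau> N_pos by (auto elim!: dvdE)
      then show ?thesis
        using y True by (simp add: norm_mult)
    qed (use y in simp)
  qed
  then show "finite ?A"
    by (rule finite_subset) simp
  from \<open>?A \<subseteq> _\<close>
  have A: "y = 0 \<or> (\<exists>m\<in>{1..<P}. y = real P * cmod (dft_indicator P D m))" if "y \<in> ?A" for y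
    using that by blast
  have "?\<mu> \<in> (\<lambda>m. cmod (dft_indicator P D m)) ` {1..<P}"
    using assms(2) by (intro Max_in) auto
  then obtain m where m: "m \<in> {1..<P}" "?\<mu> = cmod (dft_indicator P D m)"
    by auto
  have "real P * ?\<mu> = cmod (pcorr (N * P) (u 0) (u 0) (N * m))"
    using m N_pos by (simp add: pcorr_useq_self norm_mult)
  moreover have "0 < N * m" "N * m < N * P"
    using m N_pos by auto
  ultimately show "real P * ?\<mu> \<in> ?A"
    using assms(1) by blast
  have "cmod (dft_indicator P D m') \<le> ?\<mu>" if "m' \<in> {1..<P}" for m'
    using that by (intro Max_ge) auto
  moreover have "0 \<le> ?\<mu>"
    using m by simp
  ultimately show "y \<le> real P * ?\<mu>" if "y \<in> ?A" for y
    using A[OF that] by (auto intro: mult_left_mono)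
qed

lemma Max_norm_pcorr_useq_cross:
  assumes "2 \<le> M"
  shows "Max {cmod (pcorr (N * P) (u i) (u i') \<tau>) | i i' \<tau>.
                i < M \<and> i' < M \<and> i \<noteq> i' \<and> \<tau> < N * P} = real P"
    (is "Max ?C = _")
proof -
  have "?C = {real P}"
  proof (intro equalityI subsetI)
    fix y assume "y \<in> ?C"
    then show "y \<in> {real P}"
      using norm_pcorr_useq_cross by force
  next
    fix y assume "y \<in> {real P}"
    moreover have "0 < N * P"
      using N_pos card_I by simp
    ultimately show "y \<in> ?C"
      using assms unfolding mem_Collect_eq
      by (intro exI[of _ 0] exI[of _ 1] exI[of _ 0]) (simp add: norm_pcorr_useq_cross)
  qed
  then show ?thesis
    by simp
qed

end

theorem theorem6:
  fixes N M T P L :: nat and rows :: "nat \<Rightarrow> nat \<Rightarrow> nat" and I :: "nat set"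
  assumes "N \<ge> 3" and "M \<ge> 2" and "is_CFR M N rows"
    and "T \<ge> 1" and "P = N + T" and "L = N * P"
    and "I \<subseteq> {..<P}" and "card I = T"
  defines "theta_a \<equiv> Max {cmod (pcorr L (useq N P I rows i) (useq N P I rows i) tau) | i tau.
                              i < M \<and> 0 < tau \<and> tau < L}"
    and "theta_c \<equiv> Max {cmod (pcorr L (useq N P I rows i) (useq N P I rows i') tau) | i i' tau.
                              i < M \<and> i' < M \<and> i \<noteq> i' \<and> tau < L}"
    and "Omega \<equiv> {s + a * P | s a. s \<in> I \<and> a < N}"
  shows "theta_a \<ge> real P * sqrt (real N * (real P - real N) / (real P - 1))
       \<and> ((\<exists>lam. cyclic_difference_set P N lam ({..<P} - I)) \<longrightarrow>
            theta_a = real P * sqrt (real N * (real P - real N) / (real P - 1)))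
       \<and> theta_c = real P
       \<and> (\<forall>i<M. \<forall>n<L.
            (n \<in> Omega \<longrightarrow> uhat N P I rows i n = 0) \<and>
            (n \<notin> Omega \<longrightarrow> cmod (uhat N P I rows i n) = sqrt (real P / real N)))"
proof -
  interpret cfr_sequences N M P rows I
    using assms by unfold_locales auto
  have P: "2 \<le> P"
    using assms by simp
  have theta_a: "theta_a = real P * Max ((\<lambda>m. cmod (dft_indicator P D m)) ` {1..<P})"
    unfolding theta_a_def \<open>L = N * P\<close> using assms P by (intro Max_norm_pcorr_useq_self) auto
  show ?thesis
  proof (intro conjI)
    have "D \<subseteq> {..<P}"
      by blast
    then show "real P * sqrt (real N * (real P - real N) / (real P - 1)) \<le> theta_a"
      unfolding theta_a using Max_norm_dft_indicator_ge[OF _ P, of D] card_D by (simp add: mult_left_mono)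
    show "(\<exists>lam. cyclic_difference_set P N lam D) \<longrightarrow>
        theta_a = real P * sqrt (real N * (real P - real N) / (real P - 1))"
      unfolding theta_a using Max_norm_dft_indicator_cyclic_difference_set[OF _ P] by auto
    show "theta_c = real P"
      unfolding theta_c_def \<open>L = N * P\<close> using assms by (intro Max_norm_pcorr_useq_cross) auto
    show "\<forall>i<M. \<forall>n<L. (n \<in> Omega \<longrightarrow> uhat N P I rows i n = 0) \<and>
        (n \<notin> Omega \<longrightarrow> cmod (uhat N P I rows i n) = sqrt (real P / real N))"
      unfolding Omega_def \<open>L = N * P\<close> using uhat_Omega by blast
  qed
qed

end
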